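(* Let $\Theta$ be a function from the trustworthy sites of a system $N$ to policies, and suppose $N$ is coherent and $\Theta\vdash N:\mathbf{ok}$. If $N\to N'$ (in the reduction with dynamic membranes), then $N'$ is coherent and $\Theta\vdash N':\mathbf{ok}$.
   Context: Fix disjoint sets $\mathsf{Act}$ (actions) and $\mathsf{Loc}$ (localities). A policy is a multiset over $\mathsf{Act}\cup\mathsf{Loc}$ with finite support and multiplicities in $\mathbb{N}\cup\{\omega\}$; $\sqcup$ (also written $\cup$) is multiset union (multiplicities add, $\omega$ absorbing), $T_1\ \mathtt{enforces}\ T_2$ means multiset inclusion $T_1\subseteq T_2$, and $T^\omega$ gives multiplicity $\omega$ to every element of the support of $T$. Agents: $P ::= \mathbf{nil} \mid a.P \mid \mathbf{go}_T\, l.P \mid P\,|\,Q \mid\ !P$. The judgement $\Vdash P:T$ is the least relation with: $\Vdash\mathbf{nil}:\emptyset$; $\Vdash a.P:T\cup\{a\}$ if $\Vdash P:T$; $\Vdash\mathbf{go}_T\,l.P:\{l\}$ if $\Vdash P:T'$ for some $T'\subseteq T$; $\Vdash\ !P:T^\omega$ if $\Vdash P:T$; $\Vdash P|Q:T_1\cup T_2$ if $\Vdash P:T_1$, $\Vdash Q:T_2$. This $T$ is unique when it exists; $\mathrm{Pol}(P)$ denotes it (a partial function). Systems: $N ::= \mathbf{0} \mid l[\![M \rhd P]\!] \mid N_1\parallel N_2$, site names pairwise distinct, $M^l$ the membrane of $l$; a membrane is $M=(M_t,M_p)$, $M_t$ a partial function $\mathsf{Loc}\to\{\mathtt{loc},\mathtt{lgood},\mathtt{lbad}\}$,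 $M_p$ a policy. Structural equivalence: least congruence such that inside a site $|$ is commutative, associative with unit $\mathbf{nil}$, $l[\![M\rhd\ !P|Q]\!]\equiv l[\![M\rhd P|!P|Q]\!]$, and $\parallel$ commutative, associative with unit $\mathbf{0}$. Reduction: (act) $l[\![M\rhd a.P|Q]\!]\to l[\![M\rhd P|Q]\!]$; (par) $N_1\to N_1'$ implies $N_1\parallel N_2\to N_1'\parallel N_2$; (struct) $N\equiv N_1\to N_1'\equiv N'$ implies $N\to N'$; (mig') $k[\![M^k\rhd\mathbf{go}_T\,l.P|Q]\!]\parallel l[\![M^l\rhd R]\!]\to k[\![M^k\rhd Q]\!]\parallel l[\![\widehat M^l\rhd P|R]\!]$ provided, letting $T'=T$ if $M^l_t(k)=\mathtt{lgood}$ and $T'=\mathrm{Pol}(P)$ otherwise (required to be defined): $T'\subseteq M^l_p$, $M^l_p=\widehat M^l_p\sqcup T'$, and $\widehat M^l_t=M^l_t$. Trust order $<:$ reflexive with $\mathtt{loc}<:\mathtt{lbad}$, $\mathtt{loc}<:\mathtt{lgood}$; $k$ trustworthy iff $M^k_t(k)=\mathtt{lgood}$; $N$ coherent iff for every trustworthy $k$ and site $l$ with $M^k_t(l)$ defined, $M^k_t(l)<:M^l_t(l)$. $\Theta\vdash N:\mathbf{ok}$ is the least relation with: $\Theta\vdash\mathbf{0}:\mathbf{ok}$; $\Theta\vdash N_1\parallel N_2:\mathbf{ok}$ if both are; $\Theta\vdash l[\![M\rhd P]\!]:\mathbf{ok}$ if $l$ is trustworthy, $\mathrm{Pol}(P)$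 is defined and $\mathrm{Pol}(P)\sqcup M_p\subseteq\Theta(l)$; $\Theta\vdash l[\![M\rhd P]\!]:\mathbf{ok}$ if $l$ not trustworthy. *)

theory Defs
  imports Main "HOL-Library.Extended_Nat"
begin

text \<open>Actions are the type 'a, localities the type 'l; Act + Loc is the disjoint sum 'a + 'l.
  Multiplicities live in enat, where infinity plays the role of omega (absorbing for +).\<close>

typedef ('a, 'l) policy = "{f :: ('a + 'l) \<Rightarrow> enat. finite {x. f x \<noteq> 0}}"
  morphisms mult Abs_policy
  by (rule exI[of _ "\<lambda>_. 0"]) simp

setup_lifting type_definition_policy

lift_definition pempty :: "('a, 'l) policy" is "\<lambda>_. 0" by simp

lift_definition psingle :: "('a + 'l) \<Rightarrow> ('a, 'l) policy" is
  "\<lambda>x y. if y = x then 1 else 0"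
proof -
  fix x :: "'a + 'l"
  have "{y. (if y = x then 1 else 0 :: enat) \<noteq> 0} \<subseteq> {x}" by auto
  then show "finite {y. (if y = x then 1 else 0 :: enat) \<noteq> 0}" by (rule finite_subset) simp
qed

lift_definition punion :: "('a, 'l) policy \<Rightarrow> ('a, 'l) policy \<Rightarrow> ('a, 'l) policy" is
  "\<lambda>f g x. f x + g x"
proof -
  fix f g :: "'a + 'l \<Rightarrow> enat"
  assume "finite {x. f x \<noteq> 0}" "finite {x. g x \<noteq> 0}"
  moreover have "{x. f x + g x \<noteq> 0} \<subseteq> {x. f x \<noteq> 0} \<union> {x. g x \<noteq> 0}" by auto
  ultimately show "finite {x. f x + g x \<noteq> 0}" by (meson finite_UnI finite_subset)
qed

lift_definition pomega :: "('a, 'l) policy \<Rightarrow> ('a, 'l) policy" is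
  "\<lambda>f x. if f x = 0 then 0 else \<infinity>"
proof -
  fix f :: "'a + 'l \<Rightarrow> enat"
  assume "finite {x. f x \<noteq> 0}"
  moreover have "{x. (if f x = 0 then 0 else \<infinity>) \<noteq> (0::enat)} \<subseteq> {x. f x \<noteq> 0}" by auto
  ultimately show "finite {x. (if f x = 0 then 0 else \<infinity>) \<noteq> (0::enat)}" by (rule finite_subset[rotated])
qed

definition penforces :: "('a, 'l) policy \<Rightarrow> ('a, 'l) policy \<Rightarrow> bool" where
  "penforces T1 T2 \<longleftrightarrow> (\<forall>x. mult T1 x \<le> mult T2 x)"

datatype ('a, 'l) agent =
    ANil
  | APre 'a "('a, 'l) agent"
  | AGo "('a, 'l) policy" 'l "('a, 'l) agent"
  | APar "('a, 'l) agent" "('a, 'l) agent"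
  | ABang "('a, 'l) agent"

inductive haspol :: "('a, 'l) agent \<Rightarrow> ('a, 'l) policy \<Rightarrow> bool" where
  hp_nil: "haspol ANil pempty"
| hp_pre: "haspol P T \<Longrightarrow> haspol (APre a P) (punion T (psingle (Inl a)))"
| hp_go: "haspol P T' \<Longrightarrow> penforces T' T \<Longrightarrow> haspol (AGo T l P) (psingle (Inr l))"
| hp_bang: "haspol P T \<Longrightarrow> haspol (ABang P) (pomega T)"
| hp_par: "haspol P T1 \<Longrightarrow> haspol Q T2 \<Longrightarrow> haspol (APar P Q) (punion T1 T2)"

definition Pol :: "('a, 'l) agent \<Rightarrow> ('a, 'l) policy option" where
  "Pol P = (if (\<exists>T. haspol P T) then Some (THE T. haspol P T) else None)"

datatype trust = TLoc | TLgood | TLbad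

definition trust_le :: "trust \<Rightarrow> trust \<Rightarrow> bool" where
  "trust_le t u \<longleftrightarrow> t = u \<or> (t = TLoc \<and> (u = TLbad \<or> u = TLgood))"

datatype ('a, 'l) membrane = Membrane (Mt: "'l \<Rightarrow> trust option") (Mp: "('a, 'l) policy")

datatype ('a, 'l) sys =
    SZero
  | Site 'l "('a, 'l) membrane" "('a, 'l) agent"
  | SPar "('a, 'l) sys" "('a, 'l) sys"

fun sites :: "('a, 'l) sys \<Rightarrow> ('l \<times> ('a, 'l) membrane \<times> ('a, 'l) agent) list" where
  "sites SZero = []"
| "sites (Site l M P) = [(l, M, P)]"
| "sites (SPar N1 N2) = sites N1 @ sites N2"

definition wf_sys :: "('a, 'l) sys \<Rightarrow> bool" where
  "wf_sys N \<longleftrightarrow> distinct (map fst (sites N))"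

definition membrane_of :: "('a, 'l) sys \<Rightarrow> 'l \<Rightarrow> ('a, 'l) membrane option" where
  "membrane_of N l = map_of (map (\<lambda>(l, M, P). (l, M)) (sites N)) l"

definition trustworthy :: "('a, 'l) sys \<Rightarrow> 'l \<Rightarrow> bool" where
  "trustworthy N k \<longleftrightarrow> (\<exists>M. membrane_of N k = Some M \<and> Mt M k = Some TLgood)"

definition coherent :: "('a, 'l) sys \<Rightarrow> bool" where
  "coherent N \<longleftrightarrow>
     (\<forall>k l Mk Ml t. trustworthy N k \<longrightarrow> membrane_of N k = Some Mk \<longrightarrow>
        membrane_of N l = Some Ml \<longrightarrow> Mt Mk l = Some t \<longrightarrow>
        (\<exists>u. Mt Ml l = Some u \<and> trust_le t u))"

inductive aeq :: "('a, 'l) agent \<Rightarrow> ('a, 'l) agent \<Rightarrow> bool" where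
  aeq_refl: "aeq P P"
| aeq_sym: "aeq P Q \<Longrightarrow> aeq Q P"
| aeq_trans: "aeq P Q \<Longrightarrow> aeq Q R \<Longrightarrow> aeq P R"
| aeq_comm: "aeq (APar P Q) (APar Q P)"
| aeq_assoc: "aeq (APar (APar P Q) R) (APar P (APar Q R))"
| aeq_unit: "aeq (APar P ANil) P"
| aeq_pre: "aeq P Q \<Longrightarrow> aeq (APre a P) (APre a Q)"
| aeq_go: "aeq P Q \<Longrightarrow> aeq (AGo T l P) (AGo T l Q)"
| aeq_par: "aeq P P' \<Longrightarrow> aeq Q Q' \<Longrightarrow> aeq (APar P Q) (APar P' Q')"
| aeq_bang: "aeq P Q \<Longrightarrow> aeq (ABang P) (ABang Q)"

inductive seq :: "('a, 'l) sys \<Rightarrow> ('a, 'l) sys \<Rightarrow> bool" where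
  seq_refl: "seq N N"
| seq_sym: "seq N N' \<Longrightarrow> seq N' N"
| seq_trans: "seq N1 N2 \<Longrightarrow> seq N2 N3 \<Longrightarrow> seq N1 N3"
| seq_site: "aeq P Q \<Longrightarrow> seq (Site l M P) (Site l M Q)"
| seq_bang: "seq (Site l M (APar (ABang P) Q)) (Site l M (APar P (APar (ABang P) Q)))"
| seq_par: "seq N1 N1' \<Longrightarrow> seq N2 N2' \<Longrightarrow> seq (SPar N1 N2) (SPar N1' N2')"
| seq_comm: "seq (SPar N1 N2) (SPar N2 N1)"
| seq_assoc: "seq (SPar (SPar N1 N2) N3) (SPar N1 (SPar N2 N3))"
| seq_unit: "seq (SPar N SZero) N"

inductive red :: "('a, 'l) sys \<Rightarrow> ('a, 'l) sys \<Rightarrow> bool" where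
  red_act: "red (Site l M (APar (APre a P) Q)) (Site l M (APar P Q))"
| red_par: "red N1 N1' \<Longrightarrow> red (SPar N1 N2) (SPar N1' N2)"
| red_struct: "seq N N1 \<Longrightarrow> red N1 N1' \<Longrightarrow> seq N1' N' \<Longrightarrow> red N N'"
| red_mig: "(if Mt Ml k = Some TLgood then Some T else Pol P) = Some T' \<Longrightarrow>
            penforces T' (Mp Ml) \<Longrightarrow>
            Mp Ml = punion (Mp Ml') T' \<Longrightarrow>
            Mt Ml' = Mt Ml \<Longrightarrow>
            red (SPar (Site k Mk (APar (AGo T l P) Q)) (Site l Ml R))
                (SPar (Site k Mk Q) (Site l Ml' (APar P R)))"

inductive sys_ok :: "('l \<Rightarrow> ('a, 'l) policy) \<Rightarrow> ('a, 'l) sys \<Rightarrow> bool" where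
  ok_zero: "sys_ok \<Theta> SZero"
| ok_par: "sys_ok \<Theta> N1 \<Longrightarrow> sys_ok \<Theta> N2 \<Longrightarrow> sys_ok \<Theta> (SPar N1 N2)"
| ok_trust: "Mt M l = Some TLgood \<Longrightarrow> Pol P = Some T \<Longrightarrow> penforces (punion T (Mp M)) (\<Theta> l) \<Longrightarrow>
             sys_ok \<Theta> (Site l M P)"
| ok_untrust: "Mt M l \<noteq> Some TLgood \<Longrightarrow> sys_ok \<Theta> (Site l M P)"

end

theory Submission
  imports Defs
begin

text \<open>Coherence only constrains the trust tables \<open>M\<^sub>t\<close> of the sites, and neither structural
  equivalence nor reduction changes the set of pairs (site name, trust table): migration keeps
  \<open>M\<^sub>t\<close> fixed. For typing, structural equivalence preserves agent policies (for replication because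
  \<open>T \<union> T\<^sup>\<omega> = T\<^sup>\<omega>\<close>), an action only shrinks the policy of its site, and a migration removes the
  migrant from its source while the target membrane gives up \<open>T'\<close> and receives an agent whose
  policy is enforced by \<open>T'\<close>. This last point is where coherence enters: if the target \<open>l\<close> is
  trustworthy and rates the source \<open>k\<close> as \<open>lgood\<close>, coherence makes \<open>k\<close> trustworthy, so the
  typing of \<open>k\<close> guarantees that the migrant respects its declared policy \<open>T\<close>.\<close>

lemma punion_commute: "punion A B = punion B A"
  by transfer (simp add: add.commute)

lemma punion_assoc: "punion (punion A B) C = punion A (punion B C)"
  by transfer (simp add: add.assoc)

lemma punion_left_commute: "punion A (punion B C) = punion B (punion A C)"
  by (metis punion_assoc punion_commute)

lemmas punion_ac = punion_assoc punion_commute punion_left_commute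

lemma punion_pempty: "punion A pempty = A"
  by transfer simp

lemma punion_pomega_absorb: "punion A (pomega A) = pomega A"
  by transfer (simp add: fun_eq_iff)

lemma penforces_refl [simp]: "penforces A A"
  by (simp add: penforces_def)

lemma penforces_trans: "penforces A B \<Longrightarrow> penforces B C \<Longrightarrow> penforces A C"
  unfolding penforces_def by (meson order_trans)

lemma penforces_punion_mono:
  "penforces A B \<Longrightarrow> penforces C D \<Longrightarrow> penforces (punion A C) (punion B D)"
  by (simp add: penforces_def punion.rep_eq add_mono)

lemma penforces_punion_upper1: "penforces A (punion A B)"
  by (simp add: penforces_def punion.rep_eq)

lemma penforces_punion_upper2: "penforces B (punion A B)"
  by (simp add: penforces_def punion.rep_eq)

inductive_simps haspol_ANil_iff: "haspol ANil T"
inductive_simps haspol_APre_iff: "haspol (APre a P) T"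
inductive_simps haspol_AGo_iff: "haspol (AGo S l P) T"
inductive_simps haspol_ABang_iff: "haspol (ABang P) T"
inductive_simps haspol_APar_iff: "haspol (APar P Q) T"

lemmas haspol_simps =
  haspol_ANil_iff haspol_APre_iff haspol_AGo_iff haspol_ABang_iff haspol_APar_iff

lemma haspol_unique: "haspol P T \<Longrightarrow> haspol P U \<Longrightarrow> T = U"
proof (induction P T arbitrary: U rule: haspol.induct)
  case hp_nil
  then show ?case by (simp add: haspol_ANil_iff)
next
  case (hp_pre P T a)
  from hp_pre.prems obtain V where "U = punion V (psingle (Inl a))" "haspol P V"
    by (auto simp: haspol_APre_iff)
  with hp_pre.IH show ?case by blast
next
  case hp_go
  from hp_go.prems show ?case by (simp add: haspol_AGo_iff)
next
  case (hp_bang P T)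
  from hp_bang.prems obtain V where "U = pomega V" "haspol P V"
    by (auto simp: haspol_ABang_iff)
  with hp_bang.IH show ?case by blast
next
  case (hp_par P T1 Q T2)
  from hp_par.prems obtain V1 V2 where "U = punion V1 V2" "haspol P V1" "haspol Q V2"
    by (auto simp: haspol_APar_iff)
  with hp_par.IH show ?case by blast
qed

lemma Pol_eq_Some_iff: "Pol P = Some T \<longleftrightarrow> haspol P T"
  unfolding Pol_def using haspol_unique by (auto intro: theI2)

lemma haspol_aeq_iff: "aeq P Q \<Longrightarrow> haspol P T \<longleftrightarrow> haspol Q T"
proof (induction P Q arbitrary: T rule: aeq.induct)
  case (aeq_comm P Q)
  show ?case by (auto simp: haspol_APar_iff) (metis punion_commute)+
next
  case (aeq_assoc P Q R)
  show ?case by (auto simp: haspol_APar_iff) (metis punion_assoc)+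
next
  case (aeq_unit P)
  then show ?case by (simp add: haspol_APar_iff haspol_ANil_iff punion_pempty)
qed (simp_all add: haspol_simps)

lemma haspol_bang_unfold_iff:
  "haspol (APar (ABang P) Q) T \<longleftrightarrow> haspol (APar P (APar (ABang P) Q)) T"
proof -
  have "haspol (APar (ABang P) Q) T \<longleftrightarrow>
      (\<exists>TP TQ. haspol P TP \<and> haspol Q TQ \<and> T = punion (pomega TP) TQ)"
    by (auto simp: haspol_APar_iff haspol_ABang_iff)
  moreover have "haspol (APar P (APar (ABang P) Q)) T \<longleftrightarrow>
      (\<exists>TP TQ. haspol P TP \<and> haspol Q TQ \<and> T = punion TP (punion (pomega TP) TQ))"
    by (auto simp: haspol_APar_iff haspol_ABang_iff dest: haspol_unique) blast
  ultimately show ?thesis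
    by (simp flip: punion_assoc add: punion_pomega_absorb)
qed

inductive_simps sys_ok_SPar_iff: "sys_ok \<Theta> (SPar N1 N2)"
inductive_simps sys_ok_Site_Pol_iff: "sys_ok \<Theta> (Site l M P)"

lemma sys_ok_Site_iff:
  "sys_ok \<Theta> (Site l M P) \<longleftrightarrow>
     (Mt M l = Some TLgood \<longrightarrow> (\<exists>T. haspol P T \<and> penforces (punion T (Mp M)) (\<Theta> l)))"
  by (auto simp: sys_ok_Site_Pol_iff Pol_eq_Some_iff)

lemma seq_sys_ok_iff: "seq N N' \<Longrightarrow> sys_ok \<Theta> N \<longleftrightarrow> sys_ok \<Theta> N'"
proof (induction rule: seq.induct)
  case (seq_site P Q l M)
  then show ?case using haspol_aeq_iff[OF seq_site] by (simp add: sys_ok_Site_iff)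
next
  case (seq_bang l M P Q)
  then show ?case by (simp only: sys_ok_Site_iff haspol_bang_unfold_iff)
qed (auto simp: sys_ok_SPar_iff intro: ok_zero)

lemma sys_ok_act:
  assumes "sys_ok \<Theta> (Site l M (APar (APre a P) Q))"
  shows "sys_ok \<Theta> (Site l M (APar P Q))"
  unfolding sys_ok_Site_iff
proof
  assume "Mt M l = Some TLgood"
  with assms obtain TP TQ where "haspol P TP" "haspol Q TQ"
    and bound: "penforces (punion (punion (punion TP (psingle (Inl a))) TQ) (Mp M)) (\<Theta> l)"
    by (auto simp: sys_ok_Site_iff haspol_APar_iff haspol_APre_iff)
  have "penforces (punion (punion TP TQ) (Mp M))
      (punion (punion (punion TP (psingle (Inl a))) TQ) (Mp M))"
    by (meson penforces_punion_mono penforces_punion_upper1 penforces_refl)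
  with bound have "penforces (punion (punion TP TQ) (Mp M)) (\<Theta> l)"
    by (blast intro: penforces_trans)
  with \<open>haspol P TP\<close> \<open>haspol Q TQ\<close>
  show "\<exists>T. haspol (APar P Q) T \<and> penforces (punion T (Mp M)) (\<Theta> l)"
    by (blast intro: hp_par)
qed

lemma sys_ok_migration_source:
  assumes "sys_ok \<Theta> (Site k Mk (APar (AGo T l P) Q))"
  shows "sys_ok \<Theta> (Site k Mk Q)"
  unfolding sys_ok_Site_iff
proof
  assume "Mt Mk k = Some TLgood"
  with assms obtain TG TQ where "haspol Q TQ"
    and bound: "penforces (punion (punion TG TQ) (Mp Mk)) (\<Theta> k)"
    by (auto simp: sys_ok_Site_iff haspol_APar_iff)
  have "penforces (punion TQ (Mp Mk)) (punion (punion TG TQ) (Mp Mk))"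
    by (meson penforces_punion_mono penforces_punion_upper2 penforces_refl)
  with bound \<open>haspol Q TQ\<close> show "\<exists>T. haspol Q T \<and> penforces (punion T (Mp Mk)) (\<Theta> k)"
    by (blast intro: penforces_trans)
qed

lemma sys_ok_migration_target:
  assumes ok: "sys_ok \<Theta> (Site l Ml R)"
    and trust: "Mt Ml' = Mt Ml"
    and budget: "Mp Ml = punion (Mp Ml') T'"
    and migrant: "Mt Ml l = Some TLgood \<Longrightarrow> \<exists>TP. haspol P TP \<and> penforces TP T'"
  shows "sys_ok \<Theta> (Site l Ml' (APar P R))"
  unfolding sys_ok_Site_iff
proof
  assume "Mt Ml' l = Some TLgood"
  with trust have good: "Mt Ml l = Some TLgood" by simp
  with ok obtain TR where "haspol R TR" and bound: "penforces (punion TR (Mp Ml)) (\<Theta> l)"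
    by (auto simp: sys_ok_Site_iff)
  from migrant good obtain TP where "haspol P TP" "penforces TP T'" by blast
  have "punion (punion TP TR) (Mp Ml') = punion TR (punion (Mp Ml') TP)"
    by (simp add: punion_ac)
  moreover have "penforces (punion TR (punion (Mp Ml') TP)) (punion TR (Mp Ml))"
    using \<open>penforces TP T'\<close> by (simp add: budget penforces_punion_mono)
  ultimately have "penforces (punion (punion TP TR) (Mp Ml')) (\<Theta> l)"
    using bound by (metis penforces_trans)
  with \<open>haspol P TP\<close> \<open>haspol R TR\<close>
  show "\<exists>T. haspol (APar P R) T \<and> penforces (punion T (Mp Ml')) (\<Theta> l)"
    by (blast intro: hp_par)
qed

fun trust_tables :: "('a, 'l) sys \<Rightarrow> ('l \<times> ('l \<Rightarrow> trust option)) set" where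
  "trust_tables SZero = {}"
| "trust_tables (Site l M P) = {(l, Mt M)}"
| "trust_tables (SPar N1 N2) = trust_tables N1 \<union> trust_tables N2"

text \<open>Unlike \<^const>\<open>coherent\<close>, this form needs no distinctness of site names, so its
  invariance under reduction does not depend on reduction preserving \<^const>\<open>wf_sys\<close>.\<close>

definition coherent_tables :: "('l \<times> ('l \<Rightarrow> trust option)) set \<Rightarrow> bool" where
  "coherent_tables S \<longleftrightarrow>
     (\<forall>k mk l ml t. (k, mk) \<in> S \<longrightarrow> mk k = Some TLgood \<longrightarrow> (l, ml) \<in> S \<longrightarrow>
        mk l = Some t \<longrightarrow> (\<exists>u. ml l = Some u \<and> trust_le t u))"

lemma mem_trust_tables_iff:
  "(l, m) \<in> trust_tables N \<longleftrightarrow> (\<exists>M P. (l, M, P) \<in> set (sites N) \<and> m = Mt M)"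
  by (induction N) auto

lemma seq_trust_tables: "seq N N' \<Longrightarrow> trust_tables N = trust_tables N'"
  by (induction rule: seq.induct) auto

lemma red_trust_tables: "red N N' \<Longrightarrow> trust_tables N' = trust_tables N"
  by (induction rule: red.induct) (auto simp: seq_trust_tables)

lemma coherent_tables_subset: "coherent_tables S \<Longrightarrow> S' \<subseteq> S \<Longrightarrow> coherent_tables S'"
  unfolding coherent_tables_def by blast

lemma coherent_tables_lgood:
  assumes "coherent_tables S" "(l, ml) \<in> S" "(k, mk) \<in> S"
    and "ml l = Some TLgood" "ml k = Some TLgood"
  shows "mk k = Some TLgood"
proof -
  obtain u where "mk k = Some u" "trust_le TLgood u"
    using assms unfolding coherent_tables_def by blast
  then show ?thesis by (simp add: trust_le_def)
qed

lemma migrant_respects_policy: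
  assumes coh: "coherent_tables S" and "(k, Mt Mk) \<in> S" "(l, Mt Ml) \<in> S"
    and ok: "sys_ok \<Theta> (Site k Mk (APar (AGo T l P) Q))"
    and "Mt Ml l = Some TLgood"
    and declared: "(if Mt Ml k = Some TLgood then Some T else Pol P) = Some T'"
  shows "\<exists>TP. haspol P TP \<and> penforces TP T'"
proof (cases "Mt Ml k = Some TLgood")
  case True
  with declared have "T' = T" by simp
  have "Mt Mk k = Some TLgood"
    using coherent_tables_lgood[OF coh assms(3,2)] \<open>Mt Ml l = Some TLgood\<close> True .
  with ok \<open>T' = T\<close> show ?thesis
    by (auto simp: sys_ok_Site_iff haspol_APar_iff haspol_AGo_iff)
next
  case False
  with declared show ?thesis by (auto simp: Pol_eq_Some_iff)
qed

lemma red_sys_ok: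
  "red N N' \<Longrightarrow> coherent_tables (trust_tables N) \<Longrightarrow> sys_ok \<Theta> N \<Longrightarrow> sys_ok \<Theta> N'"
proof (induction rule: red.induct)
  case red_act
  from red_act.prems(2) show ?case by (rule sys_ok_act)
next
  case (red_par N1 N1' N2)
  have "coherent_tables (trust_tables N1)"
    using red_par.prems(1) by (rule coherent_tables_subset) simp
  with red_par.IH red_par.prems(2) show ?case by (simp add: sys_ok_SPar_iff)
next
  case (red_struct N N1 N1' N')
  have "coherent_tables (trust_tables N1)" "sys_ok \<Theta> N1"
    using red_struct.prems seq_trust_tables[OF red_struct.hyps(1)]
      seq_sys_ok_iff[OF red_struct.hyps(1)] by simp_all
  with red_struct.IH seq_sys_ok_iff[OF red_struct.hyps(3)] show ?case by simp
next
  case (red_mig Ml k T P T' Ml' Mk l Q R)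
  then have source: "sys_ok \<Theta> (Site k Mk (APar (AGo T l P) Q))"
    and target: "sys_ok \<Theta> (Site l Ml R)"
    by (simp_all add: sys_ok_SPar_iff)
  have "Mt Ml l = Some TLgood \<Longrightarrow> \<exists>TP. haspol P TP \<and> penforces TP T'"
    using migrant_respects_policy[OF red_mig.prems(1) _ _ source _ red_mig.hyps(1)] by simp
  then have "sys_ok \<Theta> (Site l Ml' (APar P R))"
    using sys_ok_migration_target[OF target red_mig.hyps(4,3)] by blast
  with sys_ok_migration_source[OF source] show ?case by (simp add: sys_ok_SPar_iff)
qed

lemma mem_trust_tables_if_membrane_of:
  "membrane_of N l = Some M \<Longrightarrow> (l, Mt M) \<in> trust_tables N"
  unfolding membrane_of_def by (fastforce simp: mem_trust_tables_iff dest!: map_of_SomeD)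

lemma membrane_of_if_mem_trust_tables:
  assumes "wf_sys N" "(l, m) \<in> trust_tables N"
  obtains M where "membrane_of N l = Some M" "m = Mt M"
proof -
  from assms(2) obtain M P where site: "(l, M, P) \<in> set (sites N)" and "m = Mt M"
    by (auto simp: mem_trust_tables_iff)
  have "map_of (map (\<lambda>(l, M, P). (l, M)) (sites N)) l = Some M"
  proof (rule map_of_is_SomeI)
    show "distinct (map fst (map (\<lambda>(l, M, P). (l, M)) (sites N)))"
      using assms(1) by (simp add: wf_sys_def case_prod_beta o_def)
    show "(l, M) \<in> set (map (\<lambda>(l, M, P). (l, M)) (sites N))"
      using site by force
  qed
  with \<open>m = Mt M\<close> show ?thesis by (simp add: membrane_of_def that)
qed

lemma coherent_imp_coherent_tables:
  assumes "wf_sys N" "coherent N"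
  shows "coherent_tables (trust_tables N)"
  unfolding coherent_tables_def
proof (intro allI impI)
  fix k mk l ml t
  assume "(k, mk) \<in> trust_tables N" "mk k = Some TLgood"
    and "(l, ml) \<in> trust_tables N" "mk l = Some t"
  moreover obtain Mk where "membrane_of N k = Some Mk" "mk = Mt Mk"
    using assms(1) \<open>(k, mk) \<in> trust_tables N\<close> by (rule membrane_of_if_mem_trust_tables)
  moreover obtain Ml where "membrane_of N l = Some Ml" "ml = Mt Ml"
    using assms(1) \<open>(l, ml) \<in> trust_tables N\<close> by (rule membrane_of_if_mem_trust_tables)
  ultimately show "\<exists>u. ml l = Some u \<and> trust_le t u"
    using assms(2) unfolding coherent_def trustworthy_def by blast
qed

lemma coherent_tables_imp_coherent:
  assumes "coherent_tables (trust_tables N)"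
  shows "coherent N"
  unfolding coherent_def trustworthy_def
proof (intro allI impI, elim exE conjE)
  fix k l Mk Ml t Mk'
  assume "membrane_of N k = Some Mk'" "Mt Mk' k = Some TLgood"
    and "membrane_of N k = Some Mk" "membrane_of N l = Some Ml" "Mt Mk l = Some t"
  then show "\<exists>u. Mt Ml l = Some u \<and> trust_le t u"
    using assms mem_trust_tables_if_membrane_of unfolding coherent_tables_def by fastforce
qed

theorem mainTheorem10:
  fixes \<Theta> :: "'l \<Rightarrow> ('a, 'l) policy" and N N' :: "('a, 'l) sys"
  assumes "wf_sys N"
    and "coherent N"
    and "sys_ok \<Theta> N"
    and "red N N'"
  shows "coherent N' \<and> sys_ok \<Theta> N'"
proof -
  have coh: "coherent_tables (trust_tables N)"
    using assms(1,2) by (rule coherent_imp_coherent_tables)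
  with red_trust_tables[OF assms(4)] have "coherent_tables (trust_tables N')" by simp
  then have "coherent N'" by (rule coherent_tables_imp_coherent)
  moreover have "sys_ok \<Theta> N'" using red_sys_ok[OF assms(4) coh assms(3)] .
  ultimately show ?thesis ..
qed

end
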